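(* Let $L$ be an $R_0$-algebra. Given any chain of fated filters $F_0\subset F_1\subset\cdots\subset F_n=L$ of $L$, there exists an $(\in,\in\vee q)$-fuzzy fated filter $\mu$ of $L$ whose level fated filters $U(\mu;t)=\{x\in L\mid\mu(x)\ge t\}$, $t\in(0,0.5]$, are precisely the members $F_0,F_1,\dots,F_n$ of the chain, and such that $U(\mu;0.5)=F_0$.
   Context: An $R_0$-algebra is a bounded distributive lattice $(L,\wedge,\vee,0,1)$ with an order-reversing involution $\neg$ and a binary operation $\to$ such that for all $x,y,z\in L$: $x\to y=\neg y\to\neg x$; $1\to x=x$; $(y\to z)\wedge((x\to y)\to(x\to z))=y\to z$; $x\to(y\to z)=y\to(x\to z)$; $x\to(y\vee z)=(x\to y)\vee(x\to z)$; $(x\to y)\vee((x\to y)\to(\neg x\vee y))=1$. A fated filter of $L$ is a nonempty subset $A\subseteq L$ with $1\in A$ such that for all $x,y\in L$ and $a\in A$, $a\to((x\to y)\to x)\in A$ implies $x\in A$. For $x\in L$, $t\in(0,1]$ and a fuzzy subset $\mu:L\to[0,1]$: $x_t\in\mu$ iff $\mu(x)\ge t$; $x_t\,q\,\mu$ iff $\mu(x)+t>1$; $x_t\in\vee q\,\mu$ iff $x_t\in\mu$ or $x_t\,q\,\mu$. $\mu$ is an $(\in,\in\vee q)$-fuzzy fated filter of $L$ if (1) for all $x\in L$, $t\in(0,1]$: $x_t\in\mu\Rightarrow 1_t\in\vee q\,\mu$; and (2) for all $x,a,y\in L$, $t,s\in(0,1]$: if $(a\to((x\to y)\to x))_t\in\mu$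 and $a_s\in\mu$ then $x_{\min\{t,s\}}\in\vee q\,\mu$. *)

theory Defs
  imports Complex_Main
begin

definition r0_algebra ::
  "('a::{distrib_lattice,bounded_lattice} \<Rightarrow> 'a) \<Rightarrow> ('a \<Rightarrow> 'a \<Rightarrow> 'a) \<Rightarrow> bool" where
  "r0_algebra neg imp \<longleftrightarrow>
     (\<forall>x. neg (neg x) = x) \<and>
     (\<forall>x y. x \<le> y \<longrightarrow> neg y \<le> neg x) \<and>
     (\<forall>x y. imp x y = imp (neg y) (neg x)) \<and>
     (\<forall>x. imp top x = x) \<and>
     (\<forall>x y z. inf (imp y z) (imp (imp x y) (imp x z)) = imp y z) \<and>
     (\<forall>x y z. imp x (imp y z) = imp y (imp x z)) \<and>
     (\<forall>x y z. imp x (sup y z) = sup (imp x y) (imp x z)) \<and>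
     (\<forall>x y. sup (imp x y) (imp (imp x y) (sup (neg x) y)) = top)"

definition fated_filter ::
  "('a::{distrib_lattice,bounded_lattice} \<Rightarrow> 'a \<Rightarrow> 'a) \<Rightarrow> 'a set \<Rightarrow> bool" where
  "fated_filter imp A \<longleftrightarrow>
     A \<noteq> {} \<and> top \<in> A \<and>
     (\<forall>x y a. a \<in> A \<longrightarrow> imp a (imp (imp x y) x) \<in> A \<longrightarrow> x \<in> A)"

definition fin :: "'a \<Rightarrow> real \<Rightarrow> ('a \<Rightarrow> real) \<Rightarrow> bool" where
  "fin x t \<mu> \<longleftrightarrow> \<mu> x \<ge> t"

definition fq :: "'a \<Rightarrow> real \<Rightarrow> ('a \<Rightarrow> real) \<Rightarrow> bool" where
  "fq x t \<mu> \<longleftrightarrow> \<mu> x + t > 1"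

definition fin_or_q :: "'a \<Rightarrow> real \<Rightarrow> ('a \<Rightarrow> real) \<Rightarrow> bool" where
  "fin_or_q x t \<mu> \<longleftrightarrow> fin x t \<mu> \<or> fq x t \<mu>"

definition fuzzy_subset :: "('a \<Rightarrow> real) \<Rightarrow> bool" where
  "fuzzy_subset \<mu> \<longleftrightarrow> (\<forall>x. 0 \<le> \<mu> x \<and> \<mu> x \<le> 1)"

definition in_inq_fuzzy_fated_filter ::
  "('a::{distrib_lattice,bounded_lattice} \<Rightarrow> 'a \<Rightarrow> 'a) \<Rightarrow> ('a \<Rightarrow> real) \<Rightarrow> bool" where
  "in_inq_fuzzy_fated_filter imp \<mu> \<longleftrightarrow>
     fuzzy_subset \<mu> \<and>
     (\<forall>x t. 0 < t \<and> t \<le> 1 \<longrightarrow> fin x t \<mu> \<longrightarrow> fin_or_q top t \<mu>) \<and>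
     (\<forall>x a y t s. 0 < t \<and> t \<le> 1 \<and> 0 < s \<and> s \<le> 1 \<longrightarrow>
        fin (imp a (imp (imp x y) x)) t \<mu> \<longrightarrow> fin a s \<mu> \<longrightarrow>
        fin_or_q x (min t s) \<mu>)"

definition level_set :: "('a \<Rightarrow> real) \<Rightarrow> real \<Rightarrow> 'a set" where
  "level_set \<mu> t = {x. \<mu> x \<ge> t}"

end

theory Submission
  imports Defs
begin

text \<open>A fuzzy set all of whose levels U(\<mu>;t), 0 < t \<le> 1/2, are fated filters is an
(\<in>,\<in>\<or>q)-fuzzy fated filter: below 1/2 the conditions are read off one level, and above
1/2 the level 1/2 already yields quasi-coincidence. So it suffices to attach to the chain a
fuzzy set that is constant, with value 1/(2(k+1)), on each layer F k - F (k-1); its levels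
in (0,1/2] are exactly the F k, and its level at 1/2 is F 0.\<close>

lemma in_inq_fuzzy_fated_filterI:
  assumes "fuzzy_subset \<mu>"
    and levels: "\<And>t. 0 < t \<Longrightarrow> t \<le> 1/2 \<Longrightarrow> fated_filter imp (level_set \<mu> t)"
  shows "in_inq_fuzzy_fated_filter imp \<mu>"
  unfolding in_inq_fuzzy_fated_filter_def
proof (intro conjI allI impI)
  fix x :: 'a and t :: real
  assume "0 < t \<and> t \<le> 1"
  have "top \<in> level_set \<mu> (min t (1/2))"
    using levels[of "min t (1/2)"] \<open>0 < t \<and> t \<le> 1\<close> by (simp add: fated_filter_def)
  then show "fin_or_q top t \<mu>"
    by (auto simp: level_set_def fin_or_q_def fin_def fq_def min_def split: if_splits)
next
  fix x a y :: 'a and t s :: real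
  assume ts: "0 < t \<and> t \<le> 1 \<and> 0 < s \<and> s \<le> 1"
    and "fin (imp a (imp (imp x y) x)) t \<mu>" "fin a s \<mu>"
  define r where "r = min (min t s) (1/2)"
  have "0 < r" "r \<le> 1/2" using ts by (auto simp: r_def)
  moreover have "imp a (imp (imp x y) x) \<in> level_set \<mu> r" "a \<in> level_set \<mu> r"
    using \<open>fin (imp a (imp (imp x y) x)) t \<mu>\<close> \<open>fin a s \<mu>\<close>
    by (auto simp: level_set_def fin_def r_def)
  ultimately have "x \<in> level_set \<mu> r"
    using levels unfolding fated_filter_def by blast
  then show "fin_or_q x (min t s) \<mu>"
    by (auto simp: level_set_def fin_or_q_def fin_def fq_def r_def min_def split: if_splits)
qed (use assms in simp)

definition chain_rank :: "(nat \<Rightarrow> 'a set) \<Rightarrow> 'a \<Rightarrow> nat" where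
  "chain_rank F x = (LEAST k. x \<in> F k)"

lemma chain_rank_le:
  assumes "F n = UNIV"
  shows "chain_rank F x \<le> n"
  unfolding chain_rank_def by (rule Least_le) (simp add: assms)

lemma mem_chain_iff_chain_rank_le:
  assumes chain: "\<forall>i<n. F i \<subseteq> F (Suc i)" and "F n = UNIV" and "j \<le> n"
  shows "x \<in> F j \<longleftrightarrow> chain_rank F x \<le> j"
proof
  assume "x \<in> F j"
  then show "chain_rank F x \<le> j" unfolding chain_rank_def by (rule Least_le)
next
  assume "chain_rank F x \<le> j"
  have "x \<in> F (chain_rank F x)"
    unfolding chain_rank_def by (rule LeastI[of _ n]) (simp add: assms(2))
  moreover have "F (chain_rank F x) \<subseteq> F j"
    by (rule lift_Suc_mono_le_ivl[of "{..<n}"])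
      (use chain \<open>chain_rank F x \<le> j\<close> \<open>j \<le> n\<close> in auto)
  ultimately show "x \<in> F j" by blast
qed

lemma level_set_weight_at:
  fixes w :: "nat \<Rightarrow> real"
  assumes "\<And>i j. w i \<le> w j \<longleftrightarrow> j \<le> i"
  shows "level_set (\<lambda>x. w (r x)) (w k) = {x. r x \<le> k}"
  using assms by (simp add: level_set_def)

lemma level_set_weight_cases:
  fixes w :: "nat \<Rightarrow> real"
  assumes w: "\<And>i j. w i \<le> w j \<longleftrightarrow> j \<le> i"
    and r: "\<And>x. r x \<le> n" and "t \<le> w 0"
  obtains k where "k \<le> n" "level_set (\<lambda>x. w (r x)) t = {x. r x \<le> k}"
proof
  define K where "K = {k. k \<le> n \<and> t \<le> w k}"
  have "finite K" "0 \<in> K" using \<open>t \<le> w 0\<close> by (auto simp: K_def)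
  then have "Max K \<in> K" by (intro Max_in) auto
  then show "Max K \<le> n" by (simp add: K_def)
  have "t \<le> w (r x) \<longleftrightarrow> r x \<le> Max K" for x
  proof
    assume "t \<le> w (r x)"
    then have "r x \<in> K" using r by (simp add: K_def)
    then show "r x \<le> Max K" using \<open>finite K\<close> by simp
  next
    assume "r x \<le> Max K"
    then show "t \<le> w (r x)" using \<open>Max K \<in> K\<close> w[of "Max K" "r x"] by (simp add: K_def)
  qed
  then show "level_set (\<lambda>x. w (r x)) t = {x. r x \<le> Max K}"
    by (simp add: level_set_def)
qed

lemma levels_weight_chain_rank:
  fixes w :: "nat \<Rightarrow> real"
  assumes w: "\<And>i j. w i \<le> w j \<longleftrightarrow> j \<le> i" and pos: "\<And>k. 0 < w k"
    and chain: "\<forall>i<n. F i \<subseteq> F (Suc i)" and top: "F n = UNIV"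
  shows "{level_set (\<lambda>x. w (chain_rank F x)) t | t. 0 < t \<and> t \<le> w 0} = {F k | k. k \<le> n}"
proof (intro equalityI subsetI)
  have F_eq: "F k = {x. chain_rank F x \<le> k}" if "k \<le> n" for k
    using mem_chain_iff_chain_rank_le[OF chain top that] by blast
  fix A
  assume "A \<in> {level_set (\<lambda>x. w (chain_rank F x)) t | t. 0 < t \<and> t \<le> w 0}"
  then obtain t where "t \<le> w 0" and A: "A = level_set (\<lambda>x. w (chain_rank F x)) t"
    by blast
  obtain k where "k \<le> n" "A = {x. chain_rank F x \<le> k}"
    using level_set_weight_cases[where r = "chain_rank F", OF w chain_rank_le[of F n, OF top]
        \<open>t \<le> w 0\<close>] A by metis
  then show "A \<in> {F k | k. k \<le> n}" using F_eq by blast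
next
  fix A
  assume "A \<in> {F k | k. k \<le> n}"
  then obtain k where "k \<le> n" "A = F k" by blast
  then have "A = level_set (\<lambda>x. w (chain_rank F x)) (w k)"
    using level_set_weight_at[OF w, of "chain_rank F" k] mem_chain_iff_chain_rank_le[OF chain top]
    by auto
  moreover have "0 < w k" "w k \<le> w 0" using pos w by auto
  ultimately show "A \<in> {level_set (\<lambda>x. w (chain_rank F x)) t | t. 0 < t \<and> t \<le> w 0}"
    by blast
qed

theorem corollary3p27:
  fixes neg :: "'a::{distrib_lattice,bounded_lattice} \<Rightarrow> 'a"
    and imp :: "'a \<Rightarrow> 'a \<Rightarrow> 'a"
    and F :: "nat \<Rightarrow> 'a set"
    and n :: nat
  assumes "r0_algebra neg imp"
    and "\<forall>i\<le>n. fated_filter imp (F i)"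
    and "\<forall>i<n. F i \<subset> F (Suc i)"
    and "F n = UNIV"
  shows "\<exists>\<mu>. in_inq_fuzzy_fated_filter imp \<mu> \<and>
           {level_set \<mu> t | t. 0 < t \<and> t \<le> 1/2} = {F i | i. i \<le> n} \<and>
           level_set \<mu> (1/2) = F 0"
proof -
  define w :: "nat \<Rightarrow> real" where "w k = 1 / (2 * (real k + 1))" for k
  define \<mu> where "\<mu> = (\<lambda>x. w (chain_rank F x))"
  have w_le_iff: "w i \<le> w j \<longleftrightarrow> j \<le> i" for i j by (simp add: w_def divide_simps)
  have w_pos: "0 < w k" for k by (simp add: w_def)
  have w0: "w 0 = 1/2" by (simp add: w_def)
  have chain: "\<forall>i<n. F i \<subseteq> F (Suc i)" using assms(3) by auto
  have levels: "{level_set \<mu> t | t. 0 < t \<and> t \<le> 1/2} = {F i | i. i \<le> n}"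
    using levels_weight_chain_rank[OF w_le_iff w_pos chain assms(4)]
    unfolding \<mu>_def w0 .
  have "in_inq_fuzzy_fated_filter imp \<mu>"
  proof (rule in_inq_fuzzy_fated_filterI)
    show "fuzzy_subset \<mu>" by (simp add: fuzzy_subset_def \<mu>_def w_def)
    fix t :: real
    assume "0 < t" "t \<le> 1/2"
    then obtain i where "i \<le> n" "level_set \<mu> t = F i" using levels by blast
    then show "fated_filter imp (level_set \<mu> t)" using assms(2) by simp
  qed
  moreover have "level_set \<mu> (1/2) = F 0"
    using level_set_weight_at[OF w_le_iff, of "chain_rank F" 0]
      mem_chain_iff_chain_rank_le[OF chain assms(4), of 0]
    unfolding \<mu>_def w0 by auto
  ultimately show ?thesis using levels by blast
qed

end
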